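(* Let $M=H/\Gamma$ be a three-dimensional Heisenberg manifold ($H$ the classical Heisenberg group of real upper unitriangular $3\times3$ matrices, $\Gamma\subset H$ a lattice), and let $\mu$ be the $H$-invariant probability measure on $M$. Then $\mu\times\mu$-almost all pairs of points of $M$ are not blockable.
   Context: Connecting curves for $m_1,m_2\in M$: $c(t)=\exp(tx)\cdot m_1$, $0\le t\le1$, $x$ in the Lie algebra of $H$, with $c(0)=m_1,c(1)=m_2$. The pair is blockable if there is a finite $B\subset M\setminus\{m_1,m_2\}$ with $c([0,1])\cap B\ne\emptyset$ for every connecting curve $c$. *)

theory Defs
  imports "HOL-Probability.Probability"
begin

text \<open>The point (x,y,z) stands for the matrix [[1,x,z],[0,1,y],[0,0,1]];
  matrix multiplication becomes the group law below.\<close>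

type_synonym heis = "real \<times> real \<times> real"

definition hmult :: "heis \<Rightarrow> heis \<Rightarrow> heis" where
  "hmult p q = (case p of (x, y, z) \<Rightarrow> case q of (x', y', z') \<Rightarrow>
      (x + x', y + y', z + z' + x * y'))"

definition hinv :: "heis \<Rightarrow> heis" where
  "hinv p = (case p of (x, y, z) \<Rightarrow> (- x, - y, x * y - z))"

definition hone :: heis where "hone = (0, 0, 0)"

text \<open>Lie algebra of H: strictly upper triangular matrices [[0,a,c],[0,0,b],[0,0,0]],
  encoded as (a,b,c).  Since X^3 = 0, exp X = I + X + X^2/2, which is the matrix
  [[1,a,c + a*b/2],[0,1,b],[0,0,1]].\<close>

definition hexp :: "real \<times> real \<times> real \<Rightarrow> heis" where
  "hexp X = (case X of (a, b, c) \<Rightarrow> (a, b, c + a * b / 2))"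

text \<open>Lattices: discrete subgroups of finite covolume, i.e. admitting a measurable
  fundamental domain of finite Haar measure (Haar measure on H is Lebesgue measure in
  these coordinates).\<close>

definition heis_subgroup :: "heis set \<Rightarrow> bool" where
  "heis_subgroup \<Gamma> \<longleftrightarrow> hone \<in> \<Gamma> \<and> (\<forall>g\<in>\<Gamma>. \<forall>h\<in>\<Gamma>. hmult g h \<in> \<Gamma>) \<and> (\<forall>g\<in>\<Gamma>. hinv g \<in> \<Gamma>)"

definition heis_discrete :: "heis set \<Rightarrow> bool" where
  "heis_discrete \<Gamma> \<longleftrightarrow> (\<forall>g\<in>\<Gamma>. \<exists>e>0. \<forall>h\<in>\<Gamma>. dist h g < e \<longrightarrow> h = g)"

definition heis_lattice :: "heis set \<Rightarrow> bool" where
  "heis_lattice \<Gamma> \<longleftrightarrow> heis_subgroup \<Gamma> \<and> heis_discrete \<Gamma> \<and>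
     (\<exists>F. F \<in> sets lborel \<and> emeasure lborel F < \<infinity> \<and>
          (\<forall>h. \<exists>!\<gamma>. \<gamma> \<in> \<Gamma> \<and> hmult h \<gamma> \<in> F))"

definition coset :: "heis set \<Rightarrow> heis \<Rightarrow> heis set" where
  "coset \<Gamma> h = (\<lambda>\<gamma>. hmult h \<gamma>) ` \<Gamma>"

definition hmanifold :: "heis set \<Rightarrow> heis set set" where
  "hmanifold \<Gamma> = range (coset \<Gamma>)"

definition hmanifold_sets :: "heis set \<Rightarrow> heis set set set" where
  "hmanifold_sets \<Gamma> = {A. A \<subseteq> hmanifold \<Gamma> \<and> {h. coset \<Gamma> h \<in> A} \<in> sets borel}"

definition hact :: "heis \<Rightarrow> heis set \<Rightarrow> heis set" where
  "hact g m = (\<lambda>h. hmult g h) ` m"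

definition hcurve :: "real \<times> real \<times> real \<Rightarrow> heis set \<Rightarrow> real \<Rightarrow> heis set" where
  "hcurve X m t = hact (hexp (t *\<^sub>R X)) m"

definition blockable :: "heis set \<Rightarrow> heis set \<Rightarrow> heis set \<Rightarrow> bool" where
  "blockable \<Gamma> m1 m2 \<longleftrightarrow>
     (\<exists>B. finite B \<and> B \<subseteq> hmanifold \<Gamma> - {m1, m2} \<and>
        (\<forall>X. hcurve X m1 1 = m2 \<longrightarrow> (\<exists>t\<in>{0..1}. hcurve X m1 t \<in> B)))"

end

theory Submission
  imports Defs
begin

(*
  Write a pair of points of M as (h\<Gamma>, k\<Gamma>) and put g = h\<inverse> k. Up to conjugation by h, the
  connecting curves are t \<mapsto> h (g\<gamma>)^t \<Gamma> for \<gamma> \<in> \<Gamma>, where (g\<gamma>)^t = exp (t log (g\<gamma>)). A blocking set meets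
  each of them at an interior time, so two curves whose \<gamma>'s have different images in the
  abelianisation \<real>^2 must pass through a common point of M at interior times; since \<Gamma> has
  infinitely many abelian images, a finite blocking set forces such a meeting. In coordinates a
  meeting is three polynomial equations in g and the two times: for distinct times they determine
  g smoothly in terms of the times, for equal times they confine g to a plane. Hence the set of bad
  displacements g is Lebesgue-null, and it remains to see that \<mu> \<times> \<mu> gives measure zero to pairs
  with null displacement set. This holds because the invariant measure \<mu> is absolutely continuous:
  averaging \<mu> A = \<mu> (g A) over all g \<in> H and applying Fubini bounds \<mu> A by the Haar measure of the
  preimage of A.
*)

section \<open>The group structure of H\<close>

lemma hmult_simps [simp]: "hmult (a, b, c) (a', b', c') = (a + a', b + b', c + c' + a * b')"
  by (simp add: hmult_def)

lemma hinv_simps [simp]: "hinv (a, b, c) = (- a, - b, a * b - c)"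
  by (simp add: hinv_def)

lemma hexp_simps [simp]: "hexp (a, b, c) = (a, b, c + a * b / 2)"
  by (simp add: hexp_def)

lemma hmult_assoc: "hmult (hmult a b) c = hmult a (hmult b c)"
  by (cases a; cases b; cases c) (simp add: algebra_simps)

lemma hmult_hone [simp]: "hmult hone a = a" "hmult a hone = a"
  by (cases a; simp add: hone_def)+

lemma hmult_hinv [simp]: "hmult (hinv a) a = hone" "hmult a (hinv a) = hone"
  by (cases a; simp add: hone_def algebra_simps)+

lemma hmult_hinv_cancel [simp]: "hmult (hinv a) (hmult a b) = b" "hmult a (hmult (hinv a) b) = b"
  by (metis hmult_assoc hmult_hinv hmult_hone)+

lemma hmult_left_cancel [simp]: "hmult h a = hmult h b \<longleftrightarrow> a = b"
  by (metis hmult_hinv_cancel(1))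

lemma hinv_hmult: "hinv (hmult a b) = hmult (hinv b) (hinv a)"
  by (cases a; cases b) (simp add: algebra_simps)

lemma hinv_hinv [simp]: "hinv (hinv a) = a"
  by (cases a) simp

lemma hmult_eq_components: "hmult p q = (fst p + fst q, fst (snd p) + fst (snd q), snd (snd p) + snd (snd q) + fst p * fst (snd q))"
  by (cases p; cases q) simp

lemma hinv_eq_components: "hinv p = (- fst p, - fst (snd p), fst p * fst (snd p) - snd (snd p))"
  by (cases p) simp

lemma continuous_on_hmult [continuous_intros]:
  "continuous_on S f \<Longrightarrow> continuous_on S g \<Longrightarrow> continuous_on S (\<lambda>x. hmult (f x) (g x))"
  unfolding hmult_eq_components by (intro continuous_intros)

lemma continuous_on_hinv [continuous_intros]:
  "continuous_on S f \<Longrightarrow> continuous_on S (\<lambda>x. hinv (f x))"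
  unfolding hinv_eq_components by (intro continuous_intros)

lemma borel_measurable_hmult [measurable]:
  "f \<in> borel_measurable M \<Longrightarrow> g \<in> borel_measurable M \<Longrightarrow> (\<lambda>x. hmult (f x) (g x)) \<in> borel_measurable M"
  by (rule borel_measurable_continuous_Pair[where H = hmult]) (auto intro!: continuous_intros)

lemma borel_measurable_hinv [measurable]:
  "f \<in> borel_measurable M \<Longrightarrow> (\<lambda>x. hinv (f x)) \<in> borel_measurable M"
  by (rule borel_measurable_continuous_on) (intro continuous_intros continuous_on_id)

definition hlog :: "heis \<Rightarrow> real \<times> real \<times> real" where
  "hlog g = (case g of (x, y, z) \<Rightarrow> (x, y, z - x * y / 2))"

definition hpow :: "heis \<Rightarrow> real \<Rightarrow> heis" where
  "hpow g t = hexp (t *\<^sub>R hlog g)"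

lemma hpow_simps [simp]: "hpow (a, b, c) t = (t * a, t * b, t * c + (t\<^sup>2 - t) * a * b / 2)"
  by (simp add: hpow_def hlog_def field_simps power2_eq_square)

lemma hpow_0 [simp]: "hpow g 0 = hone" and hpow_1 [simp]: "hpow g 1 = g"
  by (cases g; simp add: hone_def)+

lemma hpow_conj: "hpow (hmult (hmult h g) (hinv h)) t = hmult (hmult h (hpow g t)) (hinv h)"
  by (cases h; cases g) (simp add: algebra_simps power2_eq_square)

section \<open>Cosets and the quotient M\<close>

lemma coset_mem: "heis_subgroup \<Gamma> \<Longrightarrow> h \<in> coset \<Gamma> h"
  unfolding coset_def heis_subgroup_def by (metis hmult_hone(2) image_eqI)

lemma coset_eq_iff:
  assumes "heis_subgroup \<Gamma>"
  shows "coset \<Gamma> a = coset \<Gamma> b \<longleftrightarrow> (\<exists>\<delta>\<in>\<Gamma>. a = hmult b \<delta>)"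
proof
  assume "coset \<Gamma> a = coset \<Gamma> b"
  then show "\<exists>\<delta>\<in>\<Gamma>. a = hmult b \<delta>"
    using coset_mem[OF assms, of a] by (auto simp: coset_def)
next
  assume "\<exists>\<delta>\<in>\<Gamma>. a = hmult b \<delta>"
  then obtain \<delta> where \<delta>: "\<delta> \<in> \<Gamma>" "a = hmult b \<delta>" by blast
  have "hmult a \<gamma> \<in> coset \<Gamma> b" if "\<gamma> \<in> \<Gamma>" for \<gamma>
    using assms \<delta> that unfolding coset_def heis_subgroup_def by (auto simp: hmult_assoc)
  moreover have "hmult b \<gamma> \<in> coset \<Gamma> a" if "\<gamma> \<in> \<Gamma>" for \<gamma>
  proof -
    have "hmult b \<gamma> = hmult a (hmult (hinv \<delta>) \<gamma>)"
      using \<delta> by (simp add: hmult_assoc)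
    then show ?thesis
      using assms \<delta> that unfolding coset_def heis_subgroup_def by auto
  qed
  ultimately show "coset \<Gamma> a = coset \<Gamma> b"
    unfolding coset_def by blast
qed

lemma coset_hmult_right: "heis_subgroup \<Gamma> \<Longrightarrow> \<gamma> \<in> \<Gamma> \<Longrightarrow> coset \<Gamma> (hmult h \<gamma>) = coset \<Gamma> h"
  by (auto simp: coset_eq_iff)

lemma hact_coset: "hact g (coset \<Gamma> h) = coset \<Gamma> (hmult g h)"
  unfolding hact_def coset_def by (auto simp: hmult_assoc image_image)

lemma hcurve_conj_coset:
  "hcurve (hlog (hmult (hmult h g) (hinv h))) (coset \<Gamma> h) t = coset \<Gamma> (hmult h (hpow g t))"
  unfolding hcurve_def hpow_def[symmetric] hpow_conj hact_coset by (simp add: hmult_assoc)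

lemma heis_discrete_countable:
  assumes "heis_discrete \<Gamma>"
  shows "countable \<Gamma>"
proof -
  obtain \<B> :: "heis set set" where \<B>: "countable \<B>"
    and basis: "\<And>T. openin (top_of_set \<Gamma>) T \<Longrightarrow> \<exists>\<U>. \<U> \<subseteq> \<B> \<and> T = \<Union>\<U>"
    using subset_second_countable[of \<Gamma>] by metis
  have "{g} \<in> \<B>" if g: "g \<in> \<Gamma>" for g
  proof -
    obtain e where "e > 0" "\<forall>h\<in>\<Gamma>. dist h g < e \<longrightarrow> h = g"
      using assms g unfolding heis_discrete_def by blast
    then have "ball g e \<inter> \<Gamma> = {g}"
      using g by (auto simp: dist_commute)
    then have "openin (top_of_set \<Gamma>) {g}"
      using openin_open_Int[of "ball g e" \<Gamma>] by (simp add: Int_commute)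
    then obtain \<U> where \<U>: "\<U> \<subseteq> \<B>" "{g} = \<Union>\<U>"
      by (auto dest: basis)
    then obtain U where U: "U \<in> \<U>" "g \<in> U"
      by (metis UnionE singletonI)
    then have "U = {g}"
      using \<U>(2) by blast
    then show ?thesis
      using U(1) \<U>(1) by blast
  qed
  then have "(\<lambda>g. {g}) ` \<Gamma> \<subseteq> \<B>"
    by blast
  then have "countable ((\<lambda>g. {g}) ` \<Gamma>)"
    using \<B>(1) by (rule countable_subset)
  then show ?thesis
    by (rule countable_image_inj_on) (simp add: inj_on_def)
qed

lemma coset_preimage_image:
  assumes "heis_subgroup \<Gamma>"
  shows "{h. coset \<Gamma> h \<in> coset \<Gamma> ` S} = (\<Union>\<gamma>\<in>\<Gamma>. (\<lambda>h. hmult h \<gamma>) -` S)"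
proof -
  have "coset \<Gamma> h \<in> coset \<Gamma> ` S \<longleftrightarrow> (\<exists>h'\<in>S. coset \<Gamma> h' = coset \<Gamma> h)" for h
    by blast
  then show ?thesis
    by (auto simp: coset_eq_iff[OF assms])
qed

lemma coset_image_in_hmanifold_sets:
  assumes "heis_subgroup \<Gamma>" and "countable \<Gamma>" and "S \<in> sets borel"
  shows "coset \<Gamma> ` S \<in> hmanifold_sets \<Gamma>"
proof -
  have "(\<lambda>h. hmult h \<gamma>) -` S \<in> sets borel" for \<gamma>
    by (rule measurable_sets_borel[OF _ \<open>S \<in> sets borel\<close>]) measurable
  then have "(\<Union>\<gamma>\<in>\<Gamma>. (\<lambda>h. hmult h \<gamma>) -` S) \<in> sets borel"
    using \<open>countable \<Gamma>\<close> by (intro sets.countable_UN'') auto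
  moreover have "coset \<Gamma> ` S \<subseteq> hmanifold \<Gamma>"
    by (auto simp: hmanifold_def)
  ultimately show ?thesis
    by (simp add: hmanifold_sets_def coset_preimage_image[OF assms(1)])
qed

definition measurable_section :: "heis set \<Rightarrow> heis set measure \<Rightarrow> (heis set \<Rightarrow> heis) \<Rightarrow> bool" where
  "measurable_section \<Gamma> \<mu> s \<longleftrightarrow> s \<in> borel_measurable \<mu> \<and> (\<forall>m\<in>space \<mu>. coset \<Gamma> (s m) = m)"

lemma measurable_section_exists:
  assumes \<Gamma>: "heis_subgroup \<Gamma>" "countable \<Gamma>"
    and F: "F \<in> sets borel" "\<And>h. \<exists>!\<gamma>. \<gamma> \<in> \<Gamma> \<and> hmult h \<gamma> \<in> F"
    and \<mu>: "space \<mu> = hmanifold \<Gamma>" "sets \<mu> = hmanifold_sets \<Gamma>"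
  obtains s where "measurable_section \<Gamma> \<mu> s"
proof
  define s where "s m = (THE x. x \<in> m \<inter> F)" for m
  have unique: "\<exists>!x. x \<in> coset \<Gamma> h \<inter> F" for h
    using F(2)[of h] unfolding coset_def by blast
  have s: "s (coset \<Gamma> h) \<in> coset \<Gamma> h \<inter> F" for h
    unfolding s_def using unique by (rule theI')
  have s_eq: "s (coset \<Gamma> h) = h" if "h \<in> F" for h
    unfolding s_def using unique coset_mem[OF \<Gamma>(1)] that by (blast intro: the1_equality)
  have coset_s: "coset \<Gamma> (s m) = m" if m_space: "m \<in> space \<mu>" for m
  proof -
    obtain h where m: "m = coset \<Gamma> h"
      using m_space \<mu>(1) by (auto simp: hmanifold_def)
    then obtain \<gamma> where "\<gamma> \<in> \<Gamma>" "s m = hmult h \<gamma>"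
      using s[of h] by (auto simp: coset_def)
    then show ?thesis
      using m coset_hmult_right[OF \<Gamma>(1)] by simp
  qed
  have "s -` E \<inter> space \<mu> = coset \<Gamma> ` (F \<inter> E)" for E
  proof (intro set_eqI iffI)
    fix m
    assume m: "m \<in> s -` E \<inter> space \<mu>"
    then have "s m \<in> F"
      using s \<mu>(1) by (auto simp: hmanifold_def)
    then show "m \<in> coset \<Gamma> ` (F \<inter> E)"
      using m coset_s by (metis IntI Int_iff image_eqI vimage_eq)
  next
    fix m
    assume "m \<in> coset \<Gamma> ` (F \<inter> E)"
    then obtain h where "h \<in> F \<inter> E" "m = coset \<Gamma> h"
      by blast
    then show "m \<in> s -` E \<inter> space \<mu>"
      using s_eq \<mu>(1) by (simp add: hmanifold_def)
  qed
  then have "s \<in> borel_measurable \<mu>"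
    using coset_image_in_hmanifold_sets[OF \<Gamma>] F(1) \<mu>(2) by (intro measurableI) auto
  then show "measurable_section \<Gamma> \<mu> s"
    using coset_s by (simp add: measurable_section_def)
qed

section \<open>Null sets of H\<close>

lemma negligible_borel_null_sets: "N \<in> sets borel \<Longrightarrow> negligible N \<Longrightarrow> N \<in> null_sets lborel"
  by (simp add: negligible_iff_null_sets null_sets_completion_iff)

lemma differentiable_heis_coordinates:
  "(\<lambda>x::heis. fst x) differentiable F" "(\<lambda>x::heis. fst (snd x)) differentiable F"
  "(\<lambda>x::heis. snd (snd x)) differentiable F"
  by (intro bounded_linear_imp_differentiable bounded_linear_fst
      bounded_linear_compose[OF bounded_linear_fst bounded_linear_snd]
      bounded_linear_compose[OF bounded_linear_snd bounded_linear_snd])+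

lemma negligible_image_hmult_hinv: "negligible S \<Longrightarrow> negligible ((\<lambda>a. hmult h (hinv a)) ` S)"
  by (rule negligible_differentiable_image_negligible[OF order_refl])
    (auto simp: differentiable_on_def hmult_eq_components hinv_eq_components
      intro!: derivative_intros differentiable_heis_coordinates)

lemma negligible_image_translate: "negligible S \<Longrightarrow> negligible ((\<lambda>a. hmult (hmult h a) k) ` S)"
  by (rule negligible_differentiable_image_negligible[OF order_refl])
    (auto simp: differentiable_on_def hmult_eq_components
      intro!: derivative_intros differentiable_heis_coordinates)

lemma null_sets_hinv_hmult_preimage:
  assumes "P \<in> sets borel" and "negligible P"
  shows "{g. hmult (hinv g) h \<in> P} \<in> null_sets lborel"
proof -
  have "{g. hmult (hinv g) h \<in> P} \<subseteq> (\<lambda>a. hmult h (hinv a)) ` P"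
    by (auto simp: image_iff hinv_hmult hmult_assoc intro!: bexI[of _ "hmult (hinv _) h"])
  then have "negligible {g. hmult (hinv g) h \<in> P}"
    using negligible_image_hmult_hinv[OF assms(2)] negligible_subset by blast
  moreover have "{g. hmult (hinv g) h \<in> P} \<in> sets borel"
    using assms(1) by measurable
  ultimately show ?thesis
    by (rule negligible_borel_null_sets[rotated])
qed

section \<open>Invariant probability measures on M\<close>

definition habel :: "heis \<Rightarrow> real \<times> real" where
  "habel p = (fst p, fst (snd p))"

definition hstrip :: "real \<Rightarrow> heis set" where
  "hstrip a = fst -` {a..<a + 1}"

lemma hstrip_borel [measurable]: "hstrip a \<in> sets borel"
  unfolding hstrip_def
  by (rule measurable_sets_borel[OF borel_measurable_continuous_onI]) (auto intro: continuous_intros)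

lemma hmult_image_hstrip: "hmult (a, 0, 0) ` hstrip b = hstrip (a + b)"
proof (intro set_eqI iffI)
  fix h
  assume "h \<in> hstrip (a + b)"
  moreover obtain x y z where "h = (x, y, z)"
    by (cases h)
  ultimately have "(x - a, y, z - a * y) \<in> hstrip b" "h = hmult (a, 0, 0) (x - a, y, z - a * y)"
    by (auto simp: hstrip_def)
  then show "h \<in> hmult (a, 0, 0) ` hstrip b"
    by blast
qed (auto simp: hstrip_def hmult_eq_components)

lemma coset_images_hstrip_disjoint:
  assumes "heis_subgroup \<Gamma>" and "\<And>\<gamma>. \<gamma> \<in> \<Gamma> \<Longrightarrow> \<bar>fst \<gamma>\<bar> \<le> R" and "R + 1 \<le> \<bar>a - b\<bar>"
  shows "coset \<Gamma> ` hstrip a \<inter> coset \<Gamma> ` hstrip b = {}"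
proof (rule ccontr)
  assume "coset \<Gamma> ` hstrip a \<inter> coset \<Gamma> ` hstrip b \<noteq> {}"
  then obtain h h' where "h \<in> hstrip a" "h' \<in> hstrip b" "coset \<Gamma> h = coset \<Gamma> h'"
    by blast
  moreover from this obtain \<delta> where "\<delta> \<in> \<Gamma>" "h = hmult h' \<delta>"
    using coset_eq_iff[OF assms(1)] by blast
  ultimately have "\<bar>a - b\<bar> < \<bar>fst \<delta>\<bar> + 1"
    by (auto simp: hstrip_def hmult_eq_components)
  then show False
    using assms(2)[OF \<open>\<delta> \<in> \<Gamma>\<close>] assms(3) by linarith
qed

lemma hmanifold_eq_Union_hstrip: "hmanifold \<Gamma> = (\<Union>n::int. coset \<Gamma> ` hstrip n)"
proof -
  have "coset \<Gamma> h \<in> coset \<Gamma> ` hstrip \<lfloor>fst h\<rfloor>" for h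
    by (simp add: hstrip_def)
  then show ?thesis
    unfolding hmanifold_def by blast
qed

lemma (in prob_space) prob_eq_0_if_disjoint_copies:
  fixes A :: "nat \<Rightarrow> 'a set"
  assumes "\<And>n. A n \<in> events" and "disjoint_family A" and "\<And>n. prob (A n) = c"
  shows "c = 0"
proof -
  have "(\<lambda>n. prob (A n)) sums prob (\<Union>n. A n)"
    using assms(1,2) by (intro finite_measure_UNION) auto
  then have "(\<lambda>n. c) \<longlonglongrightarrow> 0"
    using assms(3) summable_LIMSEQ_zero sums_summable by force
  then show ?thesis
    by (simp add: LIMSEQ_const_iff)
qed

locale heis_quotient_measure = prob_space \<mu>
  for \<Gamma> :: "heis set" and \<mu> :: "heis set measure" +
  assumes subgroup: "heis_subgroup \<Gamma>"
    and countable: "countable \<Gamma>"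
    and space_eq: "space \<mu> = hmanifold \<Gamma>"
    and sets_eq: "sets \<mu> = hmanifold_sets \<Gamma>"
    and invariant: "\<And>g A. A \<in> sets \<mu> \<Longrightarrow> emeasure \<mu> (hact g ` A) = emeasure \<mu> A"
begin

lemma hact_eq_section_preimage:
  assumes s: "measurable_section \<Gamma> \<mu> s" and A: "A \<in> sets \<mu>"
  shows "hact g ` A = {m \<in> space \<mu>. coset \<Gamma> (hmult (hinv g) (s m)) \<in> A}"
proof -
  have coset_s: "coset \<Gamma> (s m) = m" if "m \<in> space \<mu>" for m
    using s that by (simp add: measurable_section_def)
  have A_sub: "A \<subseteq> hmanifold \<Gamma>"
    using A sets_eq by (simp add: hmanifold_sets_def)
  have "m \<in> space \<mu> \<and> coset \<Gamma> (hmult (hinv g) (s m)) \<in> A" if "m \<in> hact g ` A" for m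
  proof -
    obtain h where "coset \<Gamma> h \<in> A" "m = coset \<Gamma> (hmult g h)"
      using \<open>m \<in> hact g ` A\<close> A_sub by (auto simp: hmanifold_def hact_coset)
    moreover have m: "m \<in> space \<mu>"
      using calculation space_eq by (simp add: hmanifold_def)
    ultimately show ?thesis
      using hact_coset[of "hinv g" \<Gamma>] coset_s[OF m] by (metis hmult_hinv_cancel(1))
  qed
  moreover have "m \<in> hact g ` A" if "m \<in> space \<mu>" "coset \<Gamma> (hmult (hinv g) (s m)) \<in> A" for m
  proof -
    have "hact g (coset \<Gamma> (hmult (hinv g) (s m))) = m"
      using coset_s[OF that(1)] by (simp add: hact_coset)
    then show ?thesis
      using that(2) by force
  qed
  ultimately show ?thesis
    by blast
qed

lemma emeasure_eq_0_if_negligible_preimage: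
  assumes s: "measurable_section \<Gamma> \<mu> s" and A: "A \<in> sets \<mu>"
    and negligible: "negligible {h. coset \<Gamma> h \<in> A}"
  shows "emeasure \<mu> A = 0"
proof -
  interpret lborel: sigma_finite_measure lborel
    by (rule sigma_finite_lborel)
  interpret pair_sigma_finite \<mu> lborel ..
  define P where "P = {h. coset \<Gamma> h \<in> A}"
  have P [measurable]: "P \<in> sets borel"
    using A sets_eq by (simp add: hmanifold_sets_def P_def)
  have [measurable]: "s \<in> borel_measurable \<mu>"
    using s by (simp add: measurable_section_def)
  define f :: "heis set \<times> heis \<Rightarrow> ennreal" where "f x = indicator P (hmult (hinv (snd x)) (s (fst x)))" for x
  have f: "f \<in> borel_measurable (\<mu> \<Otimes>\<^sub>M lborel)"
    unfolding f_def by measurable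
  have "emeasure \<mu> A = (\<integral>\<^sup>+m. f (m, g) \<partial>\<mu>)" for g
  proof -
    have "emeasure \<mu> A = emeasure \<mu> {m \<in> space \<mu>. hmult (hinv g) (s m) \<in> P}"
      using invariant[OF A, of g] hact_eq_section_preimage[OF s A, of g] by (simp add: P_def)
    also have "\<dots> = (\<integral>\<^sup>+m. indicator {m \<in> space \<mu>. hmult (hinv g) (s m) \<in> P} m \<partial>\<mu>)"
      by (intro nn_integral_indicator[symmetric]) measurable
    also have "\<dots> = (\<integral>\<^sup>+m. f (m, g) \<partial>\<mu>)"
      by (intro nn_integral_cong) (simp add: f_def indicator_def)
    finally show ?thesis .
  qed
  then have "emeasure \<mu> A * \<infinity> = (\<integral>\<^sup>+g. (\<integral>\<^sup>+m. f (m, g) \<partial>\<mu>) \<partial>lborel)"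
    by simp
  also have "\<dots> = (\<integral>\<^sup>+m. (\<integral>\<^sup>+g. f (m, g) \<partial>lborel) \<partial>\<mu>)"
    using f by (rule Fubini)
  also have "\<dots> = 0"
  proof (rule nn_integral_zero')
    have "(\<integral>\<^sup>+g. f (m, g) \<partial>lborel) = (\<integral>\<^sup>+g. indicator {g. hmult (hinv g) (s m) \<in> P} g \<partial>lborel)" for m
      by (simp add: f_def indicator_def)
    moreover have "{g. hmult (hinv g) (s m) \<in> P} \<in> null_sets lborel" for m
      using null_sets_hinv_hmult_preimage[OF P] negligible by (simp add: P_def)
    ultimately show "AE m in \<mu>. (\<integral>\<^sup>+g. f (m, g) \<partial>lborel) = 0"
      by (auto simp: null_sets_def)
  qed
  finally show ?thesis
    by (simp add: ennreal_mult_eq_top_iff)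
qed

lemma null_sets_pair_section:
  assumes s: "measurable_section \<Gamma> \<mu> s" and N: "N \<in> sets borel" "negligible N"
  shows "{p \<in> space (\<mu> \<Otimes>\<^sub>M \<mu>). hmult (hinv (s (fst p))) (s (snd p)) \<in> N} \<in> null_sets (\<mu> \<Otimes>\<^sub>M \<mu>)"
    (is "?X \<in> _")
proof -
  have [measurable]: "s \<in> borel_measurable \<mu>" "N \<in> sets borel"
    using s N by (simp_all add: measurable_section_def)
  have coset_s: "coset \<Gamma> (s m) = m" if "m \<in> space \<mu>" for m
    using s that by (simp add: measurable_section_def)
  have X: "?X \<in> sets (\<mu> \<Otimes>\<^sub>M \<mu>)"
    by measurable
  have slice: "emeasure \<mu> (Pair m -` ?X) = 0" if m: "m \<in> space \<mu>" for m
  proof -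
    define A where "A = {m' \<in> space \<mu>. hmult (hinv (s m)) (s m') \<in> N}"
    define U where "U = (\<Union>\<gamma>\<in>\<Gamma>. (\<lambda>a. hmult (hmult (s m) a) (hinv \<gamma>)) ` N)"
    have "{h. coset \<Gamma> h \<in> A} \<subseteq> U"
    proof
      fix h
      assume "h \<in> {h. coset \<Gamma> h \<in> A}"
      then have h: "coset \<Gamma> h \<in> space \<mu>" "hmult (hinv (s m)) (s (coset \<Gamma> h)) \<in> N"
        by (simp_all add: A_def)
      obtain \<gamma> where "\<gamma> \<in> \<Gamma>" "s (coset \<Gamma> h) = hmult h \<gamma>"
        using coset_s[OF h(1)] coset_eq_iff[OF subgroup] by blast
      then have "h = hmult (hmult (s m) (hmult (hinv (s m)) (s (coset \<Gamma> h)))) (hinv \<gamma>)"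
        by (simp add: hmult_assoc)
      then show "h \<in> U"
        unfolding U_def using h(2) \<open>\<gamma> \<in> \<Gamma>\<close> by blast
    qed
    moreover have "negligible U"
      unfolding U_def
      by (intro negligible_countable_Union) (auto simp: countable image_iff negligible_image_translate[OF N(2)] simp del: hinv_simps)
    ultimately have "negligible {h. coset \<Gamma> h \<in> A}"
      using negligible_subset by blast
    moreover have "A \<in> sets \<mu>"
      unfolding A_def by measurable
    ultimately have "emeasure \<mu> A = 0"
      using emeasure_eq_0_if_negligible_preimage[OF s] by blast
    moreover have "Pair m -` ?X = A"
      using m by (auto simp: A_def space_pair_measure)
    ultimately show ?thesis
      by simp
  qed
  have "emeasure (\<mu> \<Otimes>\<^sub>M \<mu>) ?X = (\<integral>\<^sup>+m. emeasure \<mu> (Pair m -` ?X) \<partial>\<mu>)"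
    by (rule emeasure_pair_measure_alt[OF X])
  also have "\<dots> = 0"
    using slice by (simp add: nn_integral_cong[where v = "\<lambda>_. 0"])
  finally show ?thesis
    using X by (simp add: null_sets_def)
qed

lemma AE_pair_section_not_in:
  assumes s: "measurable_section \<Gamma> \<mu> s" and "negligible S"
  shows "AE p in \<mu> \<Otimes>\<^sub>M \<mu>. hmult (hinv (s (fst p))) (s (snd p)) \<notin> S"
proof -
  obtain N where N: "N \<in> null_sets lborel" "S \<subseteq> N"
    using assms(2) by (auto simp: negligible_iff_null_sets null_sets_completion_iff2)
  then have "N \<in> sets borel" "negligible N"
    by (auto simp: negligible_iff_null_sets null_sets_completionI)
  then show ?thesis
    using N(2) by (intro AE_I'[OF null_sets_pair_section[OF s]]) auto
qed

lemma coset_image_hstrip_events: "coset \<Gamma> ` hstrip a \<in> events"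
  using coset_image_in_hmanifold_sets[OF subgroup countable] sets_eq by simp

lemma prob_coset_image_hstrip: "prob (coset \<Gamma> ` hstrip a) = prob (coset \<Gamma> ` hstrip 0)"
proof -
  have "hact (a, 0, 0) ` coset \<Gamma> ` hstrip 0 = coset \<Gamma> ` hstrip a"
    unfolding image_image hact_coset by (simp flip: image_image add: hmult_image_hstrip)
  then show ?thesis
    using invariant[OF coset_image_hstrip_events] by (metis measure_def)
qed

lemma prob_coset_image_hstrip_neq_0: "prob (coset \<Gamma> ` hstrip 0) \<noteq> 0"
proof
  assume "prob (coset \<Gamma> ` hstrip 0) = 0"
  then have "coset \<Gamma> ` hstrip n \<in> null_sets \<mu>" for n
    using coset_image_hstrip_events prob_coset_image_hstrip
    by (simp add: emeasure_eq_measure null_sets_def)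
  then have "space \<mu> \<in> null_sets \<mu>"
    unfolding space_eq hmanifold_eq_Union_hstrip by (rule null_sets_UN)
  then show False
    by (simp add: null_sets_def emeasure_space_1)
qed

lemma infinite_habel: "infinite (habel ` \<Gamma>)"
  \<comment> \<open>Otherwise \<Gamma> moves x-coordinates by at most some R, and unit x-strips at mutual distance
    R + 1 have disjoint images in M, all of the same positive measure.\<close>
proof
  assume "finite (habel ` \<Gamma>)"
  then have "finite ((\<lambda>p. \<bar>fst p\<bar>) ` habel ` \<Gamma>)"
    by blast
  then have fin: "finite ((\<lambda>\<gamma>. \<bar>fst \<gamma>\<bar>) ` \<Gamma>)"
    by (simp add: image_image habel_def)
  define R where "R = Max ((\<lambda>\<gamma>. \<bar>fst \<gamma>\<bar>) ` \<Gamma>)"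
  have R: "\<bar>fst \<gamma>\<bar> \<le> R" if "\<gamma> \<in> \<Gamma>" for \<gamma>
    unfolding R_def using fin that by (intro Max_ge) auto
  have "R \<ge> 0"
    using R[of hone] subgroup by (simp add: heis_subgroup_def hone_def)
  have "disjoint_family (\<lambda>n::nat. coset \<Gamma> ` hstrip ((R + 1) * n))"
    unfolding disjoint_family_on_def
  proof (intro ballI impI coset_images_hstrip_disjoint[OF subgroup R])
    fix m n :: nat
    assume "m \<noteq> n"
    then have "1 \<le> \<bar>real m - real n\<bar>"
      by linarith
    then show "R + 1 \<le> \<bar>(R + 1) * real m - (R + 1) * real n\<bar>"
      using \<open>R \<ge> 0\<close> by (simp add: abs_mult flip: right_diff_distrib)
  qed
  then have "prob (coset \<Gamma> ` hstrip 0) = 0"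
    by (rule prob_eq_0_if_disjoint_copies[OF coset_image_hstrip_events _ prob_coset_image_hstrip])
  then show False
    using prob_coset_image_hstrip_neq_0 by contradiction
qed

end

section \<open>Meetings of connecting curves\<close>

lemma hpow_meet_iff:
  "hpow (hmult (x, y, z) (p, q, r)) s = hmult (hpow (hmult (x, y, z) (p', q', r')) t) (d1, d2, d3) \<longleftrightarrow>
     s * (x + p) = t * (x + p') + d1 \<and> s * (y + q) = t * (y + q') + d2 \<and>
     s * (z + r + x * q) + (s\<^sup>2 - s) * (x + p) * (y + q) / 2 =
       t * (z + r' + x * q') + (t\<^sup>2 - t) * (x + p') * (y + q') / 2 + d3 + t * (x + p') * d2"
  by simp

lemma negligible_meetings_distinct_times:
  "negligible {g. \<exists>s t. s \<noteq> t \<and> hpow (hmult g \<gamma>) s = hmult (hpow (hmult g \<gamma>') t) \<delta>}"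
proof -
  obtain p q r p' q' r' d1 d2 d3 where \<gamma>: "\<gamma> = (p, q, r)" "\<gamma>' = (p', q', r')" "\<delta> = (d1, d2, d3)"
    by (cases \<gamma>; cases \<gamma>'; cases \<delta>) auto
  \<comment> \<open>For \<open>s \<noteq> t\<close> the coordinate equations of \<open>hpow_meet_iff\<close> are solved uniquely for g.\<close>
  define X where "X s t = (d1 + t * p' - s * p) / (s - t)" for s t :: real
  define Y where "Y s t = (d2 + t * q' - s * q) / (s - t)" for s t :: real
  define W where "W s t x y = t * (r' + x * q') + (t\<^sup>2 - t) * (x + p') * (y + q') / 2 + d3
    + t * (x + p') * d2 - s * (r + x * q) - (s\<^sup>2 - s) * (x + p) * (y + q) / 2" for s t x y :: real
  define \<Phi> where "\<Phi> u = (X (fst u) (snd u), Y (fst u) (snd u),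
    W (fst u) (snd u) (X (fst u) (snd u)) (Y (fst u) (snd u)) / (fst u - snd u))" for u :: "real \<times> real"
  have "{g. \<exists>s t. s \<noteq> t \<and> hpow (hmult g \<gamma>) s = hmult (hpow (hmult g \<gamma>') t) \<delta>} \<subseteq> \<Phi> ` {u. fst u \<noteq> snd u}"
  proof clarify
    fix x y z s t
    assume "s \<noteq> t" and "hpow (hmult (x, y, z) \<gamma>) s = hmult (hpow (hmult (x, y, z) \<gamma>') t) \<delta>"
    then have st: "s - t \<noteq> 0"
      and e1: "s * (x + p) = t * (x + p') + d1" and e2: "s * (y + q) = t * (y + q') + d2"
      and e3: "s * (z + r + x * q) + (s\<^sup>2 - s) * (x + p) * (y + q) / 2 =
        t * (z + r' + x * q') + (t\<^sup>2 - t) * (x + p') * (y + q') / 2 + d3 + t * (x + p') * d2"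
      unfolding \<gamma> hpow_meet_iff by simp_all
    have "x = X s t"
      using e1 st by (simp add: X_def field_simps)
    moreover have "y = Y s t"
      using e2 st by (simp add: Y_def field_simps)
    moreover have "z = W s t x y / (s - t)"
      using e3 st by (simp add: W_def field_simps)
    ultimately have "(x, y, z) = \<Phi> (s, t)"
      by (simp add: \<Phi>_def)
    then show "(x, y, z) \<in> \<Phi> ` {u. fst u \<noteq> snd u}"
      using \<open>s \<noteq> t\<close> by force
  qed
  moreover have "negligible (\<Phi> ` {u. fst u \<noteq> snd u})"
  proof (rule negligible_differentiable_image_lowdim)
    show "\<Phi> differentiable_on {u. fst u \<noteq> snd u}"
      unfolding differentiable_on_def \<Phi>_def X_def Y_def W_def by (auto intro!: derivative_intros linear_imp_differentiable[OF linear_fst] linear_imp_differentiable[OF linear_snd])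
  qed simp
  ultimately show ?thesis
    using negligible_subset by blast
qed

lemma negligible_meetings_equal_times:
  assumes "habel \<gamma> \<noteq> habel \<gamma>'"
  shows "negligible {g. \<exists>s\<in>{0<..<1}. hpow (hmult g \<gamma>) s = hmult (hpow (hmult g \<gamma>') s) \<delta>}"
proof -
  obtain p q r p' q' r' d1 d2 d3 where \<gamma>: "\<gamma> = (p, q, r)" "\<gamma>' = (p', q', r')" "\<delta> = (d1, d2, d3)"
    by (cases \<gamma>; cases \<gamma>'; cases \<delta>) auto
  have pq: "p \<noteq> p' \<or> q \<noteq> q'"
    using assms by (simp add: \<gamma> habel_def)
  \<comment> \<open>With equal times the first two coordinates force \<open>s = s0\<close>, and the third one is then
    affine in g with linear part \<open>a\<close>.\<close>
  define s0 where "s0 = (if p \<noteq> p' then d1 / (p - p') else d2 / (q - q'))"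
  define a where "a = ((q - q') * (s0 - s0\<^sup>2) / 2, (s0\<^sup>2 - s0) * (p - p') / 2, 0 :: real)"
  define c where "c = - (s0 * (r - r') + (s0\<^sup>2 - s0) * (p * q - p' * q') / 2 - d3 - s0 * p' * d2)"
  have meeting_time: "s = s0" and on_hyperplane: "a \<bullet> g = c"
    if "hpow (hmult g \<gamma>) s = hmult (hpow (hmult g \<gamma>') s) \<delta>" for g s
  proof -
    obtain x y z where g: "g = (x, y, z)"
      by (cases g)
    have "s * (x + p) = s * (x + p') + d1" and "s * (y + q) = s * (y + q') + d2"
      and e3: "s * (z + r + x * q) + (s\<^sup>2 - s) * (x + p) * (y + q) / 2 =
        s * (z + r' + x * q') + (s\<^sup>2 - s) * (x + p') * (y + q') / 2 + d3 + s * (x + p') * d2"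
      using that unfolding g \<gamma> hpow_meet_iff by simp_all
    then have e1: "s * (p - p') = d1" and e2: "d2 = s * (q - q')"
      by (simp_all add: algebra_simps)
    show "s = s0"
      using pq e1 e2 by (auto simp: s0_def field_simps)
    then show "a \<bullet> g = c"
      using e3 unfolding a_def c_def g inner_prod_def e2 \<open>s = s0\<close>[symmetric]
      by (simp add: field_simps power2_eq_square)
  qed
  show ?thesis
  proof (cases "s0 \<in> {0<..<1}")
    case True
    then have "s0 - s0\<^sup>2 > 0"
      by (simp add: power2_eq_square)
    then have "a \<noteq> 0"
      using pq by (auto simp: a_def zero_prod_def)
    then have "negligible {g. a \<bullet> g = c}"
      by (simp add: negligible_hyperplane)
    moreover have "{g. \<exists>s\<in>{0<..<1}. hpow (hmult g \<gamma>) s = hmult (hpow (hmult g \<gamma>') s) \<delta>} \<subseteq> {g. a \<bullet> g = c}"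
      using on_hyperplane by blast
    ultimately show ?thesis
      using negligible_subset by blast
  next
    case False
    then have "{g. \<exists>s\<in>{0<..<1}. hpow (hmult g \<gamma>) s = hmult (hpow (hmult g \<gamma>') s) \<delta>} = {}"
      using meeting_time by blast
    then show ?thesis
      by (simp only: negligible_empty)
  qed
qed

definition curve_meetings :: "heis \<Rightarrow> heis \<Rightarrow> heis \<Rightarrow> heis set" where
  "curve_meetings \<gamma> \<gamma>' \<delta> =
    {g. \<exists>s\<in>{0<..<1}. \<exists>t\<in>{0<..<1}. hpow (hmult g \<gamma>) s = hmult (hpow (hmult g \<gamma>') t) \<delta>}"

lemma negligible_curve_meetings:
  assumes "habel \<gamma> \<noteq> habel \<gamma>'"
  shows "negligible (curve_meetings \<gamma> \<gamma>' \<delta>)"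
proof -
  have "curve_meetings \<gamma> \<gamma>' \<delta> \<subseteq>
      {g. \<exists>s t. s \<noteq> t \<and> hpow (hmult g \<gamma>) s = hmult (hpow (hmult g \<gamma>') t) \<delta>} \<union>
      {g. \<exists>s\<in>{0<..<1}. hpow (hmult g \<gamma>) s = hmult (hpow (hmult g \<gamma>') s) \<delta>}"
  proof
    fix g
    assume "g \<in> curve_meetings \<gamma> \<gamma>' \<delta>"
    then obtain s t where "s \<in> {0<..<1}" "hpow (hmult g \<gamma>) s = hmult (hpow (hmult g \<gamma>') t) \<delta>"
      unfolding curve_meetings_def by blast
    then show "g \<in> {g. \<exists>s t. s \<noteq> t \<and> hpow (hmult g \<gamma>) s = hmult (hpow (hmult g \<gamma>') t) \<delta>} \<union>
      {g. \<exists>s\<in>{0<..<1}. hpow (hmult g \<gamma>) s = hmult (hpow (hmult g \<gamma>') s) \<delta>}"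
      by (cases "s = t") blast+
  qed
  moreover have "negligible ({g. \<exists>s t. s \<noteq> t \<and> hpow (hmult g \<gamma>) s = hmult (hpow (hmult g \<gamma>') t) \<delta>} \<union>
      {g. \<exists>s\<in>{0<..<1}. hpow (hmult g \<gamma>) s = hmult (hpow (hmult g \<gamma>') s) \<delta>})"
    using negligible_meetings_distinct_times negligible_meetings_equal_times[OF assms] by (rule negligible_Un)
  ultimately show ?thesis
    using negligible_subset by blast
qed

definition crossing_displacements :: "heis set \<Rightarrow> heis set" where
  "crossing_displacements \<Gamma> =
    (\<Union>(\<gamma>, \<gamma>', \<delta>) \<in> {(\<gamma>, \<gamma>', \<delta>) \<in> \<Gamma> \<times> \<Gamma> \<times> \<Gamma>. habel \<gamma> \<noteq> habel \<gamma>'}. curve_meetings \<gamma> \<gamma>' \<delta>)"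

lemma negligible_crossing_displacements:
  assumes "countable \<Gamma>"
  shows "negligible (crossing_displacements \<Gamma>)"
proof -
  have "countable {(\<gamma>, \<gamma>', \<delta>) \<in> \<Gamma> \<times> \<Gamma> \<times> \<Gamma>. habel \<gamma> \<noteq> habel \<gamma>'}"
    by (rule countable_subset[of _ "\<Gamma> \<times> \<Gamma> \<times> \<Gamma>"]) (auto simp: assms)
  then show ?thesis
    unfolding crossing_displacements_def
    by (intro negligible_countable_Union countable_image) (auto intro: negligible_curve_meetings)
qed

lemma finite_image_factor:
  assumes "finite (f ` A)" and "\<And>x y. x \<in> A \<Longrightarrow> y \<in> A \<Longrightarrow> f x = f y \<Longrightarrow> g x = g y"
  shows "finite (g ` A)"
proof -
  have "g x = g (inv_into A f (f x))" if "x \<in> A" for x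
    using that by (intro assms(2)) (auto simp: inv_into_into f_inv_into_f)
  then have "g ` A = (\<lambda>b. g (inv_into A f b)) ` f ` A"
    by (simp add: image_image)
  then show ?thesis
    using assms(1) by simp
qed

lemma not_blockable_coset:
  assumes \<Gamma>: "heis_subgroup \<Gamma>" and infinite: "infinite (habel ` \<Gamma>)"
    and no_crossing: "hmult (hinv h) k \<notin> crossing_displacements \<Gamma>"
  shows "\<not> blockable \<Gamma> (coset \<Gamma> h) (coset \<Gamma> k)"
proof
  assume "blockable \<Gamma> (coset \<Gamma> h) (coset \<Gamma> k)"
  then obtain B where B: "finite B" "B \<subseteq> hmanifold \<Gamma> - {coset \<Gamma> h, coset \<Gamma> k}"
    and hits: "\<And>X. hcurve X (coset \<Gamma> h) 1 = coset \<Gamma> k \<Longrightarrow> \<exists>t\<in>{0..1}. hcurve X (coset \<Gamma> h) t \<in> B"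
    unfolding blockable_def by blast
  define g where "g = hmult (hinv h) k"
  define c where "c \<gamma> t = coset \<Gamma> (hmult h (hpow (hmult g \<gamma>) t))" for \<gamma> t
  have c_curve: "c \<gamma> t = hcurve (hlog (hmult (hmult k \<gamma>) (hinv h))) (coset \<Gamma> h) t" for \<gamma> t
    using hcurve_conj_coset[of h "hmult g \<gamma>"] by (simp add: c_def g_def hmult_assoc)
  have "\<exists>t\<in>{0<..<1}. c \<gamma> t \<in> B" if "\<gamma> \<in> \<Gamma>" for \<gamma>
  proof -
    have c1: "c \<gamma> 1 = coset \<Gamma> k"
      using coset_hmult_right[OF \<Gamma> that] by (simp add: c_def g_def flip: hmult_assoc)
    then obtain t where t: "t \<in> {0..1}" "c \<gamma> t \<in> B"
      using hits c_curve by metis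
    moreover have "t \<noteq> 0" "t \<noteq> 1"
      using t B(2) c1 by (auto simp: c_def)
    ultimately show ?thesis by auto
  qed
  then obtain T where T: "\<And>\<gamma>. \<gamma> \<in> \<Gamma> \<Longrightarrow> T \<gamma> \<in> {0<..<1} \<and> c \<gamma> (T \<gamma>) \<in> B"
    by metis
  have same_habel: "habel \<gamma> = habel \<gamma>'"
    if \<gamma>: "\<gamma> \<in> \<Gamma>" and \<gamma>': "\<gamma>' \<in> \<Gamma>" and meet: "c \<gamma> (T \<gamma>) = c \<gamma>' (T \<gamma>')" for \<gamma> \<gamma>'
  proof (rule ccontr)
    assume "habel \<gamma> \<noteq> habel \<gamma>'"
    obtain \<delta> where "\<delta> \<in> \<Gamma>" "hpow (hmult g \<gamma>) (T \<gamma>) = hmult (hpow (hmult g \<gamma>') (T \<gamma>')) \<delta>"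
      using meet by (auto simp: c_def coset_eq_iff[OF \<Gamma>] hmult_assoc)
    then have "g \<in> curve_meetings \<gamma> \<gamma>' \<delta>"
      unfolding curve_meetings_def using T[OF \<gamma>] T[OF \<gamma>'] by blast
    then have "g \<in> crossing_displacements \<Gamma>"
      unfolding crossing_displacements_def using \<gamma> \<gamma>' \<open>\<delta> \<in> \<Gamma>\<close> \<open>habel \<gamma> \<noteq> habel \<gamma>'\<close>
      by (intro UN_I[of "(\<gamma>, \<gamma>', \<delta>)"]) auto
    then show False
      using no_crossing by (simp add: g_def)
  qed
  have "finite ((\<lambda>\<gamma>. c \<gamma> (T \<gamma>)) ` \<Gamma>)"
    using T B(1) by (meson finite_subset image_subsetI)
  then have "finite (habel ` \<Gamma>)"
    using same_habel by (rule finite_image_factor)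
  then show False
    using infinite by contradiction
qed

theorem corollary3p6:
  fixes \<Gamma> :: "heis set" and \<mu> :: "heis set measure"
  assumes "heis_lattice \<Gamma>"
    and "prob_space \<mu>"
    and "space \<mu> = hmanifold \<Gamma>"
    and "sets \<mu> = hmanifold_sets \<Gamma>"
    and "\<forall>g. \<forall>A\<in>sets \<mu>. emeasure \<mu> (hact g ` A) = emeasure \<mu> A"
  shows "AE p in \<mu> \<Otimes>\<^sub>M \<mu>. \<not> blockable \<Gamma> (fst p) (snd p)"
proof -
  have \<Gamma>: "heis_subgroup \<Gamma>" "countable \<Gamma>"
    using assms(1) heis_discrete_countable by (auto simp: heis_lattice_def)
  interpret heis_quotient_measure \<Gamma> \<mu>
    using assms(2-5) \<Gamma> by (simp add: heis_quotient_measure_def heis_quotient_measure_axioms_def)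
  obtain F where "F \<in> sets borel" "\<And>h. \<exists>!\<gamma>. \<gamma> \<in> \<Gamma> \<and> hmult h \<gamma> \<in> F"
    using assms(1) by (auto simp: heis_lattice_def)
  then obtain s where s: "measurable_section \<Gamma> \<mu> s"
    using measurable_section_exists[OF \<Gamma>] space_eq sets_eq by metis
  have "AE p in \<mu> \<Otimes>\<^sub>M \<mu>. hmult (hinv (s (fst p))) (s (snd p)) \<notin> crossing_displacements \<Gamma>"
    using s negligible_crossing_displacements[OF \<Gamma>(2)] by (rule AE_pair_section_not_in)
  moreover have "AE p in \<mu> \<Otimes>\<^sub>M \<mu>. fst p \<in> space \<mu> \<and> snd p \<in> space \<mu>"
    by (rule AE_I2) (auto simp: space_pair_measure)
  ultimately show ?thesis
  proof eventually_elim
    case (elim p)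
    then have "\<not> blockable \<Gamma> (coset \<Gamma> (s (fst p))) (coset \<Gamma> (s (snd p)))"
      using not_blockable_coset[OF \<Gamma>(1) infinite_habel] by blast
    then show ?case
      using elim s by (simp add: measurable_section_def)
  qed
qed

end
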